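(* With the matrices defined in the context, let $\mathbf{A}=\mathbf{A_N}+\frac{2}{h^2}I_{2n(n-1)}$ and $S=\mathbf{B}\mathbf{A}^{-1}\mathbf{B}^T$. Then $$S^\dagger=S_N^\dagger+\frac{2}{h^2}(\mathbf{B}\mathbf{B}^T)^\dagger,$$ where $S_N=\mathbf{B}\mathbf{A_N}^{-1}\mathbf{B}^T$.
   Context: Fix an integer $n\ge 2$ and set $h=1/n$. Let $I_m$ denote the $m\times m$ identity matrix and $\otimes$ the Kronecker product. Let $\mathrm{B}\in\mathbb{R}^{n\times(n-1)}$ be $\mathrm{B}=\frac1h M$, where $M_{i,i}=1$ and $M_{i+1,i}=-1$ for $1\le i\le n-1$, all other entries $0$. Define $\mathrm{B}^u_x=I_n\otimes \mathrm{B}$, $\mathrm{B}^v_y=\mathrm{B}\otimes I_n$, $\mathrm{B}^q_x=I_{n-1}\otimes\mathrm{B}$, $\mathrm{B}^q_y=\mathrm{B}\otimes I_{n-1}$. Let $\mathbf{B}=\begin{bmatrix}-\mathrm{B}^u_x & -\mathrm{B}^v_y\end{bmatrix}\in\mathbb{R}^{n^2\times 2n(n-1)}$ and $\mathbf{C}=\begin{bmatrix}-(\mathrm{B}^q_y)^T & (\mathrm{B}^q_x)^T\end{bmatrix}\in\mathbb{R}^{(n-1)^2\times 2n(n-1)}$, and let $\mathbf{A_N}=\mathbf{B}^T\mathbf{B}+\mathbf{C}^T\mathbf{C}$ (invertible). The matrix $\mathbf{B}\mathbf{B}^T\in\mathbb{R}^{n^2\times n^2}$ is the pressure Laplacian with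 Neumann boundary conditions. The superscript $\dagger$ denotes the Moore–Penrose pseudoinverse. *)

theory Defs
  imports "Jordan_Normal_Form.Matrix"
begin

definition kron :: "real mat \<Rightarrow> real mat \<Rightarrow> real mat" where
  "kron A B = mat (dim_row A * dim_row B) (dim_col A * dim_col B)
     (\<lambda>(i,j). A $$ (i div dim_row B, j div dim_col B) * B $$ (i mod dim_row B, j mod dim_col B))"

definition hcat :: "real mat \<Rightarrow> real mat \<Rightarrow> real mat" where
  "hcat X Y = mat (dim_row X) (dim_col X + dim_col Y)
     (\<lambda>(i,j). if j < dim_col X then X $$ (i,j) else Y $$ (i, j - dim_col X))"

definition inv_mat :: "real mat \<Rightarrow> real mat" where
  "inv_mat A = (THE X. X \<in> carrier_mat (dim_row A) (dim_row A) \<and> A * X = 1\<^sub>m (dim_row A)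
                        \<and> X * A = 1\<^sub>m (dim_row A))"

definition pinv :: "real mat \<Rightarrow> real mat" where
  "pinv A = (THE X. X \<in> carrier_mat (dim_col A) (dim_row A) \<and> A * X * A = A \<and> X * A * X = X
              \<and> transpose_mat (A * X) = A * X \<and> transpose_mat (X * A) = X * A)"

definition hh :: "nat \<Rightarrow> real" where "hh n = 1 / real n"

text \<open>M in R^{n x (n-1)}: M(i,i)=1, M(i+1,i)=-1 (1-based in the paper).\<close>
definition Mmat :: "nat \<Rightarrow> real mat" where
  "Mmat n = mat n (n - 1) (\<lambda>(i,j). if i = j then 1 else if i = j + 1 then -1 else 0)"

definition Bmat :: "nat \<Rightarrow> real mat" where
  "Bmat n = (1 / hh n) \<cdot>\<^sub>m Mmat n"

definition Bux :: "nat \<Rightarrow> real mat" where "Bux n = kron (1\<^sub>m n) (Bmat n)"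
definition Bvy :: "nat \<Rightarrow> real mat" where "Bvy n = kron (Bmat n) (1\<^sub>m n)"
definition Bqx :: "nat \<Rightarrow> real mat" where "Bqx n = kron (1\<^sub>m (n - 1)) (Bmat n)"
definition Bqy :: "nat \<Rightarrow> real mat" where "Bqy n = kron (Bmat n) (1\<^sub>m (n - 1))"

definition BB :: "nat \<Rightarrow> real mat" where
  "BB n = hcat (- Bux n) (- Bvy n)"

definition CC :: "nat \<Rightarrow> real mat" where
  "CC n = hcat (- transpose_mat (Bqy n)) (transpose_mat (Bqx n))"

definition AN :: "nat \<Rightarrow> real mat" where
  "AN n = transpose_mat (BB n) * BB n + transpose_mat (CC n) * CC n"

end

theory Submission
  imports Defs "Jordan_Normal_Form.Determinant"
begin

text \<open>
  Write \<open>X = A\<^sub>N\<inverse>\<close> and \<open>Y = (A\<^sub>N + c I)\<inverse>\<close>. Because \<open>B C\<^sup>T = 0\<close>, the matrix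
  \<open>A\<^sub>N = B\<^sup>T B + C\<^sup>T C\<close> satisfies \<open>A\<^sub>N B\<^sup>T = B\<^sup>T B B\<^sup>T\<close>; hence \<open>X\<close> commutes with \<open>B\<^sup>T B\<close> and
  \<open>B\<^sup>T B X B\<^sup>T = B\<^sup>T\<close>. Consequently \<open>K = B X B\<^sup>T\<close> is the orthogonal projection onto the range
  of \<open>B\<close>, it is its own pseudoinverse, and \<open>B X\<^sup>2 B\<^sup>T\<close> is the pseudoinverse of \<open>B B\<^sup>T\<close>.
  The resolvent identity \<open>X = Y + c Y X\<close> then gives \<open>(B Y B\<^sup>T)(K + c B X\<^sup>2 B\<^sup>T) = K\<close>, and the
  Penrose conditions identify \<open>K + c B X\<^sup>2 B\<^sup>T\<close> as the pseudoinverse of \<open>B Y B\<^sup>T\<close>.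
  For the staggered-grid matrices, \<open>B C\<^sup>T = 0\<close> is the identity \<open>div \<circ> curl = 0\<close>, and \<open>A\<^sub>N\<close>
  is invertible because a discrete velocity field that is both divergence- and curl-free
  vanishes, the one-dimensional difference matrix \<open>M\<close> having a left inverse.
\<close>

lemma assoc_mult_mat_dim:
  "dim_col A = dim_row B \<Longrightarrow> dim_col B = dim_row C \<Longrightarrow> (A :: 'a :: semiring_0 mat) * B * C = A * (B * C)"
  by (rule assoc_mult_mat[of A "dim_row A" "dim_col A" B "dim_col B" C "dim_col C"]) auto

lemma transpose_mult_dim:
  "dim_col A = dim_row B \<Longrightarrow>
   transpose_mat ((A :: 'a :: comm_semiring_0 mat) * B) = transpose_mat B * transpose_mat A"
  by (rule transpose_mult[of A "dim_row A" "dim_col A" B "dim_col B"]) auto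

lemma add_mult_distrib_mat_dim:
  "dim_row A = dim_row B \<Longrightarrow> dim_col A = dim_col B \<Longrightarrow> dim_col A = dim_row C \<Longrightarrow>
   ((A :: 'a :: semiring_0 mat) + B) * C = A * C + B * C"
  by (rule add_mult_distrib_mat[of A "dim_row A" "dim_col A" B C "dim_col C"]) auto

lemma mult_add_distrib_mat_dim:
  "dim_col A = dim_row B \<Longrightarrow> dim_row B = dim_row C \<Longrightarrow> dim_col B = dim_col C \<Longrightarrow>
   (A :: 'a :: semiring_0 mat) * (B + C) = A * B + A * C"
  by (rule mult_add_distrib_mat[of A "dim_row A" "dim_col A" B "dim_col B" C]) auto

lemma mult_smult_assoc_mat_dim:
  "dim_col A = dim_row B \<Longrightarrow> (k \<cdot>\<^sub>m (A :: 'a :: comm_semiring_0 mat)) * B = k \<cdot>\<^sub>m (A * B)"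
  by (rule mult_smult_assoc_mat[of A "dim_row A" "dim_col A" B "dim_col B"]) auto

lemma mult_smult_distrib_dim:
  "dim_col A = dim_row B \<Longrightarrow> (A :: 'a :: comm_semiring_0 mat) * (k \<cdot>\<^sub>m B) = k \<cdot>\<^sub>m (A * B)"
  by (rule mult_smult_distrib[of A "dim_row A" "dim_col A" B "dim_col B"]) auto

lemma right_add_zero_mat_dim [simp]:
  "dim_row A = r \<Longrightarrow> dim_col A = c \<Longrightarrow> (A :: 'a :: monoid_add mat) + 0\<^sub>m r c = A"
  by (intro eq_matI) auto

lemma transpose_smult_mat [simp]: "transpose_mat (c \<cdot>\<^sub>m A) = c \<cdot>\<^sub>m transpose_mat A"
  by (intro eq_matI) auto

lemma smult_mult_mat_vec:
  "dim_vec v = dim_col A \<Longrightarrow> ((c :: 'a :: comm_semiring_0) \<cdot>\<^sub>m A) *\<^sub>v v = c \<cdot>\<^sub>v (A *\<^sub>v v)"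
  by (intro eq_vecI) (auto simp: scalar_prod_def sum_distrib_left ac_simps intro!: sum.cong)

lemma mult_mat_zero_vec: "dim_col A = n \<Longrightarrow> (A :: 'a :: semiring_0 mat) *\<^sub>v 0\<^sub>v n = 0\<^sub>v (dim_row A)"
  by (intro eq_vecI) (auto simp: scalar_prod_def)

lemma uminus_add_eq_zero_vec:
  assumes a: "(a :: 'a :: group_add vec) \<in> carrier_vec n" and b: "b \<in> carrier_vec n" and ab: "- a + b = 0\<^sub>v n"
  shows "a = b"
proof (rule eq_vecI)
  fix i assume i: "i < dim_vec b"
  have "(- a + b) $ i = 0\<^sub>v n $ i" using ab by simp
  then have "- a $ i + b $ i = 0" using i a b by simp
  then show "a $ i = b $ i" by (metis add_minus_cancel add.right_neutral)
qed (use a b in simp)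

lemma conjugate_real_vec [simp]: "conjugate (v :: real vec) = v"
  by (intro eq_vecI) (auto simp: conjugate_vec_def)

lemma scalar_prod_self_nonneg: "0 \<le> (v :: real vec) \<bullet> v"
  using conjugate_square_ge_0_vec[of v] by simp

lemma scalar_prod_self_eq_0_iff: "(v :: real vec) \<in> carrier_vec n \<Longrightarrow> v \<bullet> v = 0 \<longleftrightarrow> v = 0\<^sub>v n"
  using conjugate_square_eq_0_vec[of v n] by simp

lemma scalar_prod_gram:
  fixes B :: "real mat"
  assumes B: "B \<in> carrier_mat m k" and x: "x \<in> carrier_vec k"
  shows "x \<bullet> ((transpose_mat B * B) *\<^sub>v x) = (B *\<^sub>v x) \<bullet> (B *\<^sub>v x)"
proof -
  have "x \<bullet> ((transpose_mat B * B) *\<^sub>v x) = (transpose_mat B *\<^sub>v (B *\<^sub>v x)) \<bullet> x"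
    using B x by (simp add: comm_scalar_prod[of x k])
  also have "\<dots> = (B *\<^sub>v x) \<bullet> (B *\<^sub>v x)"
    using transpose_vec_mult_scalar[OF B x, of "B *\<^sub>v x"] B x by simp
  finally show ?thesis .
qed

definition gram_sum :: "real mat \<Rightarrow> real mat \<Rightarrow> real mat" where
  "gram_sum B C = transpose_mat B * B + transpose_mat C * C"

lemma gram_sum_carrier:
  "B \<in> carrier_mat m k \<Longrightarrow> C \<in> carrier_mat p k \<Longrightarrow> gram_sum B C \<in> carrier_mat k k"
  unfolding gram_sum_def by auto

lemma transpose_gram_sum:
  "B \<in> carrier_mat m k \<Longrightarrow> C \<in> carrier_mat p k \<Longrightarrow> transpose_mat (gram_sum B C) = gram_sum B C"
  unfolding gram_sum_def by (subst transpose_add[of _ k k]) (auto simp: transpose_mult_dim)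

lemma scalar_prod_gram_sum:
  fixes B C :: "real mat"
  assumes B: "B \<in> carrier_mat m k" and C: "C \<in> carrier_mat p k" and x: "x \<in> carrier_vec k"
  shows "x \<bullet> (gram_sum B C *\<^sub>v x) = (B *\<^sub>v x) \<bullet> (B *\<^sub>v x) + (C *\<^sub>v x) \<bullet> (C *\<^sub>v x)"
proof -
  have "gram_sum B C *\<^sub>v x = (transpose_mat B * B) *\<^sub>v x + (transpose_mat C * C) *\<^sub>v x"
    unfolding gram_sum_def using B C x by (intro add_mult_distrib_mat_vec[of _ k k]) auto
  then have "x \<bullet> (gram_sum B C *\<^sub>v x)
      = x \<bullet> ((transpose_mat B * B) *\<^sub>v x) + x \<bullet> ((transpose_mat C * C) *\<^sub>v x)"
    using B C x by (simp add: scalar_prod_add_distrib[of _ k])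
  then show ?thesis
    using scalar_prod_gram[OF B x] scalar_prod_gram[OF C x] by simp
qed

lemma gram_sum_kernel:
  fixes B C :: "real mat"
  assumes B: "B \<in> carrier_mat m k" and C: "C \<in> carrier_mat p k" and x: "x \<in> carrier_vec k"
    and ker: "gram_sum B C *\<^sub>v x = 0\<^sub>v k"
  shows "B *\<^sub>v x = 0\<^sub>v m" and "C *\<^sub>v x = 0\<^sub>v p"
proof -
  have "(B *\<^sub>v x) \<bullet> (B *\<^sub>v x) + (C *\<^sub>v x) \<bullet> (C *\<^sub>v x) = 0"
    using scalar_prod_gram_sum[OF B C x] ker x by simp
  then have "(B *\<^sub>v x) \<bullet> (B *\<^sub>v x) = 0" "(C *\<^sub>v x) \<bullet> (C *\<^sub>v x) = 0"
    using scalar_prod_self_nonneg[of "B *\<^sub>v x"] scalar_prod_self_nonneg[of "C *\<^sub>v x"] by linarith+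
  then show "B *\<^sub>v x = 0\<^sub>v m" "C *\<^sub>v x = 0\<^sub>v p"
    using scalar_prod_self_eq_0_iff[of "B *\<^sub>v x" m] scalar_prod_self_eq_0_iff[of "C *\<^sub>v x" p] B C x
    by auto
qed

lemma shifted_gram_sum_kernel:
  fixes B C :: "real mat"
  assumes B: "B \<in> carrier_mat m k" and C: "C \<in> carrier_mat p k" and c: "c > 0"
    and x: "x \<in> carrier_vec k" and ker: "(gram_sum B C + c \<cdot>\<^sub>m 1\<^sub>m k) *\<^sub>v x = 0\<^sub>v k"
  shows "x = 0\<^sub>v k"
proof -
  have G: "gram_sum B C \<in> carrier_mat k k" using gram_sum_carrier[OF B C] .
  have "gram_sum B C *\<^sub>v x + c \<cdot>\<^sub>v x = 0\<^sub>v k"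
    using ker G x by (subst (asm) add_mult_distrib_mat_vec[of _ k k]) (auto simp: smult_mult_mat_vec)
  then have "x \<bullet> (gram_sum B C *\<^sub>v x + c \<cdot>\<^sub>v x) = 0" using x by simp
  then have "x \<bullet> (gram_sum B C *\<^sub>v x) + c * (x \<bullet> x) = 0"
    using G x by (subst (asm) scalar_prod_add_distrib[of _ k]) auto
  then have "x \<bullet> x = 0"
    using scalar_prod_gram_sum[OF B C x] c scalar_prod_self_nonneg[of x]
      scalar_prod_self_nonneg[of "B *\<^sub>v x"] scalar_prod_self_nonneg[of "C *\<^sub>v x"]
    by (smt (verit) mult_pos_pos)
  then show ?thesis using x by (simp add: scalar_prod_self_eq_0_iff)
qed

section \<open>Inverses and pseudoinverses\<close>

lemma inv_mat_eqI:
  assumes A: "A \<in> carrier_mat k k" and X: "X \<in> carrier_mat k k"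
    and AX: "A * X = 1\<^sub>m k" and XA: "X * A = 1\<^sub>m k"
  shows "inv_mat A = X"
  unfolding inv_mat_def
proof (rule the_equality)
  show "X \<in> carrier_mat (dim_row A) (dim_row A) \<and> A * X = 1\<^sub>m (dim_row A) \<and> X * A = 1\<^sub>m (dim_row A)"
    using A X AX XA by auto
  fix Y assume "Y \<in> carrier_mat (dim_row A) (dim_row A) \<and> A * Y = 1\<^sub>m (dim_row A) \<and> Y * A = 1\<^sub>m (dim_row A)"
  then have Y: "Y \<in> carrier_mat k k" and AY: "A * Y = 1\<^sub>m k" using A by auto
  have "Y = (X * A) * Y" using XA Y by simp
  also have "\<dots> = X * (A * Y)" using X A Y by simp
  also have "\<dots> = X" using AY X by simp
  finally show "Y = X" .
qed

lemma inv_mat_if_kernel_trivial: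
  fixes M :: "real mat"
  assumes M: "M \<in> carrier_mat k k"
    and ker: "\<And>x. x \<in> carrier_vec k \<Longrightarrow> M *\<^sub>v x = 0\<^sub>v k \<Longrightarrow> x = 0\<^sub>v k"
  shows "inv_mat M \<in> carrier_mat k k" and "M * inv_mat M = 1\<^sub>m k" and "inv_mat M * M = 1\<^sub>m k"
proof -
  have "det M \<noteq> 0" using det_0_iff_vec_prod_zero[OF M] ker by blast
  then obtain X where "X \<in> carrier_mat k k" "M * X = 1\<^sub>m k" "X * M = 1\<^sub>m k"
    using det_non_zero_imp_unit[OF M, of undefined] unfolding Units_def by (auto simp: ring_mat_def)
  with inv_mat_eqI[OF M] show "inv_mat M \<in> carrier_mat k k" "M * inv_mat M = 1\<^sub>m k" "inv_mat M * M = 1\<^sub>m k"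
    by auto
qed

lemma inverse_mat_commute:
  fixes M X N :: "'a :: semiring_1 mat"
  assumes M: "M \<in> carrier_mat k k" and X: "X \<in> carrier_mat k k" and N: "N \<in> carrier_mat k k"
    and MX: "M * X = 1\<^sub>m k" and XM: "X * M = 1\<^sub>m k" and MN: "M * N = N * M"
  shows "X * N = N * X"
proof -
  have "X * N = X * N * (M * X)" using MX X N by simp
  also have "\<dots> = X * (N * M) * X" using M X N by (simp add: assoc_mult_mat_dim)
  also have "\<dots> = (X * M) * N * X" using M X N MN by (simp add: assoc_mult_mat_dim)
  finally show ?thesis using XM X N by simp
qed

lemma transpose_inverse_mat:
  fixes M X :: "'a :: comm_semiring_1 mat"
  assumes M: "M \<in> carrier_mat k k" and X: "X \<in> carrier_mat k k"
    and MX: "M * X = 1\<^sub>m k" and XM: "X * M = 1\<^sub>m k" and MT: "transpose_mat M = M"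
  shows "transpose_mat X = X"
proof -
  have XtM: "transpose_mat X * M = 1\<^sub>m k"
    using arg_cong[OF MX, of transpose_mat] MT M X by (simp add: transpose_mult_dim)
  have "transpose_mat X = transpose_mat X * (M * X)" using MX X by simp
  also have "\<dots> = (transpose_mat X * M) * X" using M X by (simp add: assoc_mult_mat_dim)
  finally show ?thesis using XtM X by simp
qed

lemma pinv_eqI:
  fixes A X :: "real mat"
  assumes A: "A \<in> carrier_mat m k" and X: "X \<in> carrier_mat k m"
    and c1: "A * X * A = A" and c2: "X * A * X = X"
    and c3: "transpose_mat (A * X) = A * X" and c4: "transpose_mat (X * A) = X * A"
  shows "pinv A = X"
  unfolding pinv_def
proof (rule the_equality)
  show "X \<in> carrier_mat (dim_col A) (dim_row A) \<and> A * X * A = A \<and> X * A * X = X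
              \<and> transpose_mat (A * X) = A * X \<and> transpose_mat (X * A) = X * A"
    using assms by auto
  fix Y assume "Y \<in> carrier_mat (dim_col A) (dim_row A) \<and> A * Y * A = A \<and> Y * A * Y = Y
              \<and> transpose_mat (A * Y) = A * Y \<and> transpose_mat (Y * A) = Y * A"
  then have Y: "Y \<in> carrier_mat k m" and d1: "A * Y * A = A" and d2: "Y * A * Y = Y"
    and d3: "transpose_mat (A * Y) = A * Y" and d4: "transpose_mat (Y * A) = Y * A" using A by auto
  have D[simp]: "dim_row A = m" "dim_col A = k" "dim_row X = k" "dim_col X = m"
    "dim_row Y = k" "dim_col Y = m"
    using A X Y by auto
  let ?At = "transpose_mat A" and ?Xt = "transpose_mat X" and ?Yt = "transpose_mat Y"
  have c3': "?Xt * ?At = A * X" using c3 by (simp add: transpose_mult_dim)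
  have c4': "?At * ?Xt = X * A" using c4 by (simp add: transpose_mult_dim)
  have d3': "?Yt * ?At = A * Y" using d3 by (simp add: transpose_mult_dim)
  have d4': "?At * ?Yt = Y * A" using d4 by (simp add: transpose_mult_dim)
  have d1t: "?At = ?At * (?Yt * ?At)"
    using arg_cong[OF d1, of transpose_mat] by (simp add: transpose_mult_dim assoc_mult_mat_dim)
  have c1t: "?At = ?At * (?Xt * ?At)"
    using arg_cong[OF c1, of transpose_mat] by (simp add: transpose_mult_dim assoc_mult_mat_dim)
  have "X = X * (?Xt * ?At)" using c2 c3' by (simp add: assoc_mult_mat_dim)
  also have "\<dots> = X * ((?Xt * ?At) * (?Yt * ?At))"
    by (subst d1t) (simp add: assoc_mult_mat_dim)
  also have "\<dots> = (X * A * X) * A * Y" by (simp only: c3' d3') (simp add: assoc_mult_mat_dim)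
  finally have XAY: "X = X * A * Y" using c2 by simp
  have "Y = (?At * ?Yt) * Y" using d2 d4' by simp
  also have "\<dots> = ((?At * ?Xt) * (?At * ?Yt)) * Y"
    by (subst c1t) (simp add: assoc_mult_mat_dim)
  also have "\<dots> = X * A * (Y * A * Y)" by (simp only: c4' d4') (simp add: assoc_mult_mat_dim)
  finally show "Y = X" using XAY d2 by simp
qed

lemma pinv_eqI_projection:
  fixes A X P :: "real mat"
  assumes A: "A \<in> carrier_mat m m" and X: "X \<in> carrier_mat m m"
    and PT: "transpose_mat P = P" and AX: "A * X = P" and XA: "X * A = P"
    and PA: "P * A = A" and PX: "P * X = X"
  shows "pinv A = X"
  by (rule pinv_eqI[OF A X]) (simp_all add: AX XA PA PX PT)

section \<open>Schur complements of a shifted Gram matrix\<close>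

context
  fixes B C X :: "real mat" and m p k :: nat
  assumes B: "B \<in> carrier_mat m k" and C: "C \<in> carrier_mat p k"
    and orth: "B * transpose_mat C = 0\<^sub>m m p"
    and X: "X \<in> carrier_mat k k"
    and gram_X: "gram_sum B C * X = 1\<^sub>m k" and X_gram: "X * gram_sum B C = 1\<^sub>m k"
begin

private lemma dims [simp]:
  "dim_row B = m" "dim_col B = k" "dim_row C = p" "dim_col C = k" "dim_row X = k" "dim_col X = k"
  using B C X by auto

private lemma gram_dims [simp]: "dim_row (gram_sum B C) = k" "dim_col (gram_sum B C) = k"
  using gram_sum_carrier[OF B C] by auto

lemma transpose_inv_gram_sum: "transpose_mat X = X"
  using transpose_inverse_mat[OF gram_sum_carrier[OF B C] X gram_X X_gram transpose_gram_sum[OF B C]] .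

lemma gram_sum_mult_transpose: "gram_sum B C * transpose_mat B = transpose_mat B * (B * transpose_mat B)"
proof -
  have "C * transpose_mat B = 0\<^sub>m p m"
    using arg_cong[OF orth, of transpose_mat] by (simp add: transpose_mult_dim)
  then show ?thesis
    unfolding gram_sum_def by (simp add: add_mult_distrib_mat_dim assoc_mult_mat_dim)
qed

lemma inv_gram_sum_commute: "X * (transpose_mat B * B) = transpose_mat B * B * X"
proof (rule inverse_mat_commute[OF gram_sum_carrier[OF B C] X _ gram_X X_gram])
  have B_gram: "B * gram_sum B C = B * transpose_mat B * B"
    using arg_cong[OF gram_sum_mult_transpose, of transpose_mat] transpose_gram_sum[OF B C]
    by (simp add: transpose_mult_dim assoc_mult_mat_dim)
  have "gram_sum B C * (transpose_mat B * B) = (gram_sum B C * transpose_mat B) * B"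
    by (simp add: assoc_mult_mat_dim)
  also have "\<dots> = transpose_mat B * (B * transpose_mat B * B)"
    by (simp add: gram_sum_mult_transpose assoc_mult_mat_dim)
  also have "\<dots> = transpose_mat B * B * gram_sum B C"
    by (simp add: B_gram assoc_mult_mat_dim)
  finally show "gram_sum B C * (transpose_mat B * B) = transpose_mat B * B * gram_sum B C" .
qed (use B in auto)

lemma inv_gram_sum_commute_mult:
  "dim_row W = k \<Longrightarrow> X * (transpose_mat B * (B * W)) = transpose_mat B * (B * (X * W))"
  using inv_gram_sum_commute by (simp add: assoc_mult_mat_dim[symmetric])

lemma gram_projection_transpose: "transpose_mat B * (B * (X * transpose_mat B)) = transpose_mat B"
proof -
  have "transpose_mat B = X * (gram_sum B C * transpose_mat B)"
    using X_gram by (simp add: assoc_mult_mat_dim[symmetric])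
  also have "\<dots> = transpose_mat B * (B * (X * transpose_mat B))"
    by (simp add: gram_sum_mult_transpose inv_gram_sum_commute_mult)
  finally show ?thesis by simp
qed

lemma gram_projection_mult: "dim_row W = k \<Longrightarrow> B * (X * (transpose_mat B * (B * W))) = B * W"
  using arg_cong[OF gram_projection_transpose, of transpose_mat] transpose_inv_gram_sum
  by (simp add: transpose_mult_dim assoc_mult_mat_dim[symmetric])

lemma transpose_gram_projection: "transpose_mat (B * X * transpose_mat B) = B * X * transpose_mat B"
  using transpose_inv_gram_sum by (simp add: transpose_mult_dim assoc_mult_mat_dim)

lemma inv_gram_projection_transpose:
  "transpose_mat B * (B * (X * (X * transpose_mat B))) = X * transpose_mat B"
proof -
  have "transpose_mat B * (B * (X * (X * transpose_mat B)))
      = X * (transpose_mat B * (B * (X * transpose_mat B)))"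
    by (rule inv_gram_sum_commute_mult[symmetric]) simp
  then show ?thesis by (simp add: gram_projection_transpose)
qed

lemma pinv_gram_projection: "pinv (B * X * transpose_mat B) = B * X * transpose_mat B"
  by (rule pinv_eqI_projection[of _ m, OF _ _ transpose_gram_projection])
    (simp_all add: assoc_mult_mat_dim gram_projection_transpose carrier_matI)

lemma pinv_mult_transpose: "pinv (B * transpose_mat B) = B * X * X * transpose_mat B"
proof (rule pinv_eqI_projection[of _ m, OF _ _ transpose_gram_projection])
  show product: "B * transpose_mat B * (B * X * X * transpose_mat B) = B * X * transpose_mat B"
    by (simp add: assoc_mult_mat_dim inv_gram_projection_transpose)
  show "B * X * X * transpose_mat B * (B * transpose_mat B) = B * X * transpose_mat B"
    using arg_cong[OF product, of transpose_mat] transpose_inv_gram_sum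
    by (simp add: transpose_mult_dim assoc_mult_mat_dim)
qed (simp_all add: assoc_mult_mat_dim gram_projection_mult carrier_matI)

lemma pinv_shifted_schur_complement:
  assumes Y: "Y \<in> carrier_mat k k"
    and gram_Y: "(gram_sum B C + c \<cdot>\<^sub>m 1\<^sub>m k) * Y = 1\<^sub>m k"
    and Y_gram: "Y * (gram_sum B C + c \<cdot>\<^sub>m 1\<^sub>m k) = 1\<^sub>m k"
  shows "pinv (B * Y * transpose_mat B)
       = pinv (B * X * transpose_mat B) + c \<cdot>\<^sub>m pinv (B * transpose_mat B)"
proof -
  have [simp]: "dim_row Y = k" "dim_col Y = k" using Y by auto
  have YT: "transpose_mat Y = Y"
    using transpose_gram_sum[OF B C] gram_sum_carrier[OF B C]
    by (intro transpose_inverse_mat[OF _ Y gram_Y Y_gram]) (auto simp: transpose_add[of _ k k])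
  have resolvent: "X = Y + c \<cdot>\<^sub>m (Y * X)"
  proof -
    have "X = (Y * (gram_sum B C + c \<cdot>\<^sub>m 1\<^sub>m k)) * X" using Y_gram by simp
    also have "\<dots> = Y + c \<cdot>\<^sub>m (Y * X)"
      using gram_X by (simp add: add_mult_distrib_mat_dim mult_add_distrib_mat_dim
          assoc_mult_mat_dim mult_smult_distrib_dim mult_smult_assoc_mat_dim)
    finally show ?thesis .
  qed
  define Z where "Z = B * X * transpose_mat B + c \<cdot>\<^sub>m (B * X * X * transpose_mat B)"
  have [simp]: "dim_row Z = m" "dim_col Z = m" unfolding Z_def by auto
  have SZ: "B * Y * transpose_mat B * Z = B * X * transpose_mat B"
  proof -
    have "B * Y * transpose_mat B * Z = B * ((Y + c \<cdot>\<^sub>m (Y * X)) * transpose_mat B)"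
      unfolding Z_def
      by (simp add: add_mult_distrib_mat_dim mult_add_distrib_mat_dim assoc_mult_mat_dim
          mult_smult_distrib_dim mult_smult_assoc_mat_dim gram_projection_transpose
          inv_gram_projection_transpose)
    then show ?thesis using resolvent by (simp add: assoc_mult_mat_dim)
  qed
  have ZT: "transpose_mat Z = Z"
    unfolding Z_def using transpose_inv_gram_sum
    by (subst transpose_add[of _ m m]) (auto simp: transpose_mult_dim assoc_mult_mat_dim)
  have "pinv (B * Y * transpose_mat B) = Z"
  proof (rule pinv_eqI_projection[of _ m, OF _ _ transpose_gram_projection SZ])
    show "Z * (B * Y * transpose_mat B) = B * X * transpose_mat B"
      using arg_cong[OF SZ, of transpose_mat] ZT YT transpose_gram_projection
      by (simp add: transpose_mult_dim assoc_mult_mat_dim)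
  qed (simp_all add: Z_def mult_add_distrib_mat_dim mult_smult_distrib_dim assoc_mult_mat_dim
      gram_projection_mult gram_projection_transpose carrier_matI)
  then show ?thesis
    unfolding Z_def pinv_gram_projection pinv_mult_transpose .
qed

end

theorem pinv_shifted_gram_schur_complement:
  fixes B C :: "real mat" and c :: real
  assumes B: "B \<in> carrier_mat m k" and C: "C \<in> carrier_mat p k"
    and orth: "B * transpose_mat C = 0\<^sub>m m p" and c: "c > 0"
    and ker: "\<And>x. x \<in> carrier_vec k \<Longrightarrow> gram_sum B C *\<^sub>v x = 0\<^sub>v k \<Longrightarrow> x = 0\<^sub>v k"
  shows "pinv (B * inv_mat (gram_sum B C + c \<cdot>\<^sub>m 1\<^sub>m k) * transpose_mat B)
       = pinv (B * inv_mat (gram_sum B C) * transpose_mat B) + c \<cdot>\<^sub>m pinv (B * transpose_mat B)"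
proof -
  have G: "gram_sum B C \<in> carrier_mat k k" using gram_sum_carrier[OF B C] .
  note X = inv_mat_if_kernel_trivial[OF G ker]
  note Y = inv_mat_if_kernel_trivial[of "gram_sum B C + c \<cdot>\<^sub>m 1\<^sub>m k",
      OF _ shifted_gram_sum_kernel[OF B C c]]
  show ?thesis using G by (intro pinv_shifted_schur_complement[OF B C orth X Y]) auto
qed

section \<open>Kronecker products and block rows\<close>

lemma sum_mult_split_nat:
  "(\<Sum>t\<in>{0..<p * q}. f t) = (\<Sum>a\<in>{0..<p}. \<Sum>b\<in>{0..<q}. f (a * q + b))" for p q :: nat
proof (induction p)
  case (Suc p)
  have "(\<Sum>t\<in>{0..<Suc p * q}. f t) = (\<Sum>t\<in>{0..<p * q}. f t) + (\<Sum>t\<in>{p * q..<p * q + q}. f t)"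
    by (simp add: sum.atLeastLessThan_concat add.commute)
  also have "(\<Sum>t\<in>{p * q..<p * q + q}. f t) = (\<Sum>b\<in>{0..<q}. f (p * q + b))"
    using sum.shift_bounds_nat_ivl[of f 0 "p * q" q] by (simp add: add.commute)
  finally show ?case using Suc by simp
qed simp

lemma sum_add_split_nat:
  "(\<Sum>t\<in>{0..<a + b}. f t) = (\<Sum>t\<in>{0..<a}. f t) + (\<Sum>t\<in>{0..<b}. f (a + t))" for a b :: nat
  using sum.shift_bounds_nat_ivl[of f 0 a b]
  by (simp add: sum.atLeastLessThan_concat[of 0 a "a + b", symmetric] add.commute)

lemma mod_less_of_less_mult: "i < a * b \<Longrightarrow> i mod b < (b :: nat)"
  by (cases "b = 0") auto

lemma kron_dims [simp]:
  "dim_row (kron A B) = dim_row A * dim_row B" "dim_col (kron A B) = dim_col A * dim_col B"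
  unfolding kron_def by auto

lemma kron_index:
  "i < dim_row A * dim_row B \<Longrightarrow> j < dim_col A * dim_col B \<Longrightarrow>
   kron A B $$ (i, j) = A $$ (i div dim_row B, j div dim_col B) * B $$ (i mod dim_row B, j mod dim_col B)"
  unfolding kron_def by auto

lemma kron_mult:
  assumes "dim_col A = dim_row C" "dim_col B = dim_row D"
  shows "kron A B * kron C D = kron (A * C) (B * D)"
proof (rule eq_matI)
  fix i j assume "i < dim_row (kron (A * C) (B * D))" "j < dim_col (kron (A * C) (B * D))"
  then have i: "i < dim_row A * dim_row B" and j: "j < dim_col C * dim_col D" by auto
  let ?a = "dim_col A" and ?b = "dim_col B"
  have "(kron A B * kron C D) $$ (i, j) = (\<Sum>t\<in>{0..<?a * ?b}. kron A B $$ (i, t) * kron C D $$ (t, j))"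
    using i j assms by (auto simp: scalar_prod_def intro!: sum.cong)
  also have "\<dots> = (\<Sum>a\<in>{0..<?a}. \<Sum>b\<in>{0..<?b}.
       (A $$ (i div dim_row B, a) * C $$ (a, j div dim_col D)) *
       (B $$ (i mod dim_row B, b) * D $$ (b, j mod dim_col D)))"
    unfolding sum_mult_split_nat
  proof (intro sum.cong refl)
    fix a b assume a: "a \<in> {0..<?a}" and b: "b \<in> {0..<?b}"
    have "a * ?b + b < Suc a * ?b" using b by simp
    also have "\<dots> \<le> ?a * ?b" using a by (intro mult_le_mono1) simp
    finally have "a * ?b + b < ?a * ?b" .
    moreover have "(a * ?b + b) div ?b = a" "(a * ?b + b) mod ?b = b" using b by auto
    ultimately show "kron A B $$ (i, a * ?b + b) * kron C D $$ (a * ?b + b, j) =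
       (A $$ (i div dim_row B, a) * C $$ (a, j div dim_col D)) *
       (B $$ (i mod dim_row B, b) * D $$ (b, j mod dim_col D))"
      using i j assms by (simp add: ac_simps kron_index)
  qed
  also have "\<dots> = (\<Sum>a\<in>{0..<?a}. A $$ (i div dim_row B, a) * C $$ (a, j div dim_col D)) *
                   (\<Sum>b\<in>{0..<?b}. B $$ (i mod dim_row B, b) * D $$ (b, j mod dim_col D))"
    by (simp add: sum_product)
  also have "\<dots> = kron (A * C) (B * D) $$ (i, j)"
    using i j assms less_mult_imp_div_less[OF i] mod_less_of_less_mult[OF i]
      less_mult_imp_div_less[OF j] mod_less_of_less_mult[OF j]
    by (simp add: scalar_prod_def kron_index)
  finally show "(kron A B * kron C D) $$ (i, j) = kron (A * C) (B * D) $$ (i, j)" .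
qed auto

lemma transpose_kron: "transpose_mat (kron A B) = kron (transpose_mat A) (transpose_mat B)"
  by (rule eq_matI) (auto simp: kron_index less_mult_imp_div_less mod_less_of_less_mult)

lemma kron_one: "kron (1\<^sub>m a) (1\<^sub>m b) = 1\<^sub>m (a * b)"
proof (rule eq_matI)
  fix i j assume "i < dim_row (1\<^sub>m (a * b))" "j < dim_col (1\<^sub>m (a * b))"
  then have i: "i < a * b" and j: "j < a * b" by auto
  have "(i div b = j div b \<and> i mod b = j mod b) = (i = j)"
    by (metis div_mult_mod_eq)
  then show "kron (1\<^sub>m a) (1\<^sub>m b) $$ (i, j) = 1\<^sub>m (a * b) $$ (i, j)"
    using i j less_mult_imp_div_less[OF i] mod_less_of_less_mult[OF i]
      less_mult_imp_div_less[OF j] mod_less_of_less_mult[OF j]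
    by (auto simp: kron_index)
qed auto

lemma kron_smult_left: "kron (c \<cdot>\<^sub>m A) B = c \<cdot>\<^sub>m kron A B"
  by (rule eq_matI) (auto simp: kron_index less_mult_imp_div_less mod_less_of_less_mult)

lemma kron_smult_right: "kron A (c \<cdot>\<^sub>m B) = c \<cdot>\<^sub>m kron A B"
  by (rule eq_matI) (auto simp: kron_index less_mult_imp_div_less mod_less_of_less_mult)

lemma hcat_dims [simp]:
  "dim_row (hcat X Y) = dim_row X" "dim_col (hcat X Y) = dim_col X + dim_col Y"
  unfolding hcat_def by auto

lemma hcat_index:
  "i < dim_row X \<Longrightarrow> j < dim_col X + dim_col Y \<Longrightarrow>
   hcat X Y $$ (i, j) = (if j < dim_col X then X $$ (i, j) else Y $$ (i, j - dim_col X))"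
  unfolding hcat_def by auto

lemma hcat_uminus: "dim_row Y = dim_row X \<Longrightarrow> hcat (- X) (- Y) = - hcat X Y"
  by (rule eq_matI) (auto simp: hcat_index)

lemma hcat_mult_transpose_hcat:
  assumes "dim_col X = dim_col Z" "dim_col Y = dim_col W" "dim_row Y = dim_row X" "dim_row W = dim_row Z"
  shows "hcat X Y * transpose_mat (hcat Z W) = X * transpose_mat Z + Y * transpose_mat W"
proof (rule eq_matI)
  fix i j assume "i < dim_row (X * transpose_mat Z + Y * transpose_mat W)"
    "j < dim_col (X * transpose_mat Z + Y * transpose_mat W)"
  then have i: "i < dim_row X" and j: "j < dim_row Z" using assms by auto
  have "(hcat X Y * transpose_mat (hcat Z W)) $$ (i, j) =
     (\<Sum>t\<in>{0..<dim_col X + dim_col Y}. hcat X Y $$ (i, t) * hcat Z W $$ (j, t))"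
    using i j assms by (auto simp: scalar_prod_def intro!: sum.cong)
  also have "\<dots> = (\<Sum>t\<in>{0..<dim_col X}. X $$ (i, t) * Z $$ (j, t))
      + (\<Sum>t\<in>{0..<dim_col Y}. Y $$ (i, t) * W $$ (j, t))"
    unfolding sum_add_split_nat using i j assms by (auto simp: hcat_index intro!: sum.cong)
  also have "\<dots> = (X * transpose_mat Z + Y * transpose_mat W) $$ (i, j)"
    using i j assms by (auto simp: scalar_prod_def intro!: sum.cong)
  finally show "(hcat X Y * transpose_mat (hcat Z W)) $$ (i, j)
      = (X * transpose_mat Z + Y * transpose_mat W) $$ (i, j)" .
qed (use assms in auto)

lemma hcat_mult_append_vec:
  assumes Y: "dim_row Y = dim_row X" and u: "u \<in> carrier_vec (dim_col X)" and v: "v \<in> carrier_vec (dim_col Y)"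
  shows "hcat X Y *\<^sub>v (u @\<^sub>v v) = X *\<^sub>v u + Y *\<^sub>v v"
proof (rule eq_vecI)
  fix i assume "i < dim_vec (X *\<^sub>v u + Y *\<^sub>v v)"
  then have i: "i < dim_row X" using Y by simp
  have "row (hcat X Y) i = row X i @\<^sub>v row Y i"
    by (rule eq_vecI) (use i Y in \<open>auto simp: hcat_index\<close>)
  then show "(hcat X Y *\<^sub>v (u @\<^sub>v v)) $ i = (X *\<^sub>v u + Y *\<^sub>v v) $ i"
    using i Y u v by (simp add: scalar_prod_append[of _ "dim_col X" _ "dim_col Y"])
qed (use Y in simp)

section \<open>The staggered-grid operators\<close>

definition cumsum_mat :: "nat \<Rightarrow> real mat" where
  "cumsum_mat n = mat (n - 1) n (\<lambda>(j, i). if i \<le> j then 1 else 0)"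

lemma Mmat_dims [simp]: "dim_row (Mmat n) = n" "dim_col (Mmat n) = n - 1"
  unfolding Mmat_def by auto

lemma cumsum_mat_dims [simp]: "dim_row (cumsum_mat n) = n - 1" "dim_col (cumsum_mat n) = n"
  unfolding cumsum_mat_def by auto

lemma cumsum_mat_mult_Mmat: "cumsum_mat n * Mmat n = 1\<^sub>m (n - 1)"
proof (rule eq_matI)
  fix j k assume "j < dim_row (1\<^sub>m (n - 1))" "k < dim_col (1\<^sub>m (n - 1))"
  then have j: "j < n - 1" and k: "k < n - 1" by auto
  have "(cumsum_mat n * Mmat n) $$ (j, k) = (\<Sum>i\<in>{0..<n}. (if i \<le> j then 1 else 0) *
       ((if i = k then 1 else 0) - (if i = k + 1 then 1 else 0)))"
    using j k unfolding cumsum_mat_def Mmat_def by (auto simp: scalar_prod_def intro!: sum.cong)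
  also have "\<dots> = (\<Sum>i\<in>{0..<n}. (if i = k then (if k \<le> j then 1 else 0) else 0)
                 - (if i = k + 1 then (if k + 1 \<le> j then 1 else 0) else 0))"
    by (rule sum.cong) auto
  also have "\<dots> = (\<Sum>i\<in>{0..<n}. (if i = k then (if k \<le> j then 1 else 0) else 0))
                 - (\<Sum>i\<in>{0..<n}. (if i = k + 1 then (if k + 1 \<le> j then 1 else 0) else 0))"
    by (rule sum_subtractf)
  also have "\<dots> = 1\<^sub>m (n - 1) $$ (j, k)" using j k by auto
  finally show "(cumsum_mat n * Mmat n) $$ (j, k) = 1\<^sub>m (n - 1) $$ (j, k)" .
qed auto

lemma Bmat_dims [simp]: "dim_row (Bmat n) = n" "dim_col (Bmat n) = n - 1"
  unfolding Bmat_def by auto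

lemma cumsum_mat_mult_Bmat: "n > 0 \<Longrightarrow> cumsum_mat n * Bmat n = real n \<cdot>\<^sub>m 1\<^sub>m (n - 1)"
  using cumsum_mat_mult_Mmat[of n] by (simp add: Bmat_def hh_def mult_smult_distrib_dim)

lemma staggered_dims [simp]:
  "dim_row (Bux n) = n * n" "dim_col (Bux n) = n * (n - 1)"
  "dim_row (Bvy n) = n * n" "dim_col (Bvy n) = (n - 1) * n"
  "dim_row (Bqx n) = (n - 1) * n" "dim_col (Bqx n) = (n - 1) * (n - 1)"
  "dim_row (Bqy n) = n * (n - 1)" "dim_col (Bqy n) = (n - 1) * (n - 1)"
  unfolding Bux_def Bvy_def Bqx_def Bqy_def by auto

lemma Bux_mult_Bqy: "Bux n * Bqy n = Bvy n * Bqx n"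
  unfolding Bux_def Bvy_def Bqx_def Bqy_def by (simp add: kron_mult)

lemma transpose_Bux_mult_Bvy: "transpose_mat (Bux n) * Bvy n = Bqy n * transpose_mat (Bqx n)"
  unfolding Bux_def Bvy_def Bqx_def Bqy_def by (simp add: kron_mult transpose_kron)

lemma Bux_left_inverse: "n > 0 \<Longrightarrow> kron (1\<^sub>m n) (cumsum_mat n) * Bux n = real n \<cdot>\<^sub>m 1\<^sub>m (n * (n - 1))"
  unfolding Bux_def by (simp add: kron_mult cumsum_mat_mult_Bmat kron_smult_right kron_one)

lemma Bvy_left_inverse: "n > 0 \<Longrightarrow> kron (cumsum_mat n) (1\<^sub>m n) * Bvy n = real n \<cdot>\<^sub>m 1\<^sub>m ((n - 1) * n)"
  unfolding Bvy_def by (simp add: kron_mult cumsum_mat_mult_Bmat kron_smult_left kron_one)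

lemma BB_carrier: "BB n \<in> carrier_mat (n * n) (2 * n * (n - 1))"
  unfolding BB_def carrier_mat_def by (auto simp: algebra_simps)

lemma CC_carrier: "CC n \<in> carrier_mat ((n - 1) * (n - 1)) (2 * n * (n - 1))"
  unfolding CC_def carrier_mat_def by (auto simp: algebra_simps)

lemma BB_mult_transpose_CC: "BB n * transpose_mat (CC n) = 0\<^sub>m (n * n) ((n - 1) * (n - 1))"
proof -
  have "BB n * transpose_mat (CC n) = - Bux n * - Bqy n + - Bvy n * Bqx n"
    unfolding BB_def CC_def by (subst hcat_mult_transpose_hcat) (simp_all add: transpose_uminus)
  also have "\<dots> = 0\<^sub>m (n * n) ((n - 1) * (n - 1))"
    by (rule eq_matI) (simp_all add: Bux_mult_Bqy)
  finally show ?thesis .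
qed

lemma kernel_trivial_if_left_inverse:
  fixes M L :: "real mat"
  assumes L: "L \<in> carrier_mat a r" and M: "M \<in> carrier_mat r a"
    and LM: "L * M = c \<cdot>\<^sub>m 1\<^sub>m a" and c: "c \<noteq> 0"
    and u: "u \<in> carrier_vec a" and Mu: "M *\<^sub>v u = 0\<^sub>v r"
  shows "u = 0\<^sub>v a"
proof -
  have "c \<cdot>\<^sub>v u = (L * M) *\<^sub>v u" unfolding LM using u by (simp add: smult_mult_mat_vec)
  also have "\<dots> = L *\<^sub>v (M *\<^sub>v u)"
    using L M u by (intro assoc_mult_mat_vec[of _ a r _ a]) auto
  also have "\<dots> = 0\<^sub>v a" using Mu L by (simp add: mult_mat_zero_vec)
  finally have cu: "c \<cdot>\<^sub>v u = 0\<^sub>v a" .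
  show ?thesis
  proof (rule eq_vecI)
    fix i assume "i < dim_vec (0\<^sub>v a)"
    then have "c * u $ i = 0" using arg_cong[OF cu, of "\<lambda>w. w $ i"] u by simp
    then show "u $ i = 0\<^sub>v a $ i" using c \<open>i < dim_vec (0\<^sub>v a)\<close> by simp
  qed (use u in simp)
qed

lemma div_curl_free_eq_zero:
  assumes n: "n > 0" and u: "u \<in> carrier_vec (n * (n - 1))" and v: "v \<in> carrier_vec ((n - 1) * n)"
    and div: "Bux n *\<^sub>v u + Bvy n *\<^sub>v v = 0\<^sub>v (n * n)"
    and curl: "transpose_mat (Bqy n) *\<^sub>v u = transpose_mat (Bqx n) *\<^sub>v v"
  shows "u = 0\<^sub>v (n * (n - 1))" and "v = 0\<^sub>v ((n - 1) * n)"
proof -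
  let ?k = "n * (n - 1)" and ?q = "(n - 1) * (n - 1)"
  have Bux: "Bux n \<in> carrier_mat (n * n) ?k" and Bvy: "Bvy n \<in> carrier_mat (n * n) ((n - 1) * n)"
    and Bqy: "transpose_mat (Bqy n) \<in> carrier_mat ?q ?k" by auto
  have "gram_sum (Bux n) (transpose_mat (Bqy n)) *\<^sub>v u
      = (transpose_mat (Bux n) * Bux n) *\<^sub>v u + (Bqy n * transpose_mat (Bqy n)) *\<^sub>v u"
    unfolding gram_sum_def transpose_transpose using u Bux Bqy
    by (intro add_mult_distrib_mat_vec[of _ ?k ?k]) auto
  also have "\<dots> = transpose_mat (Bux n) *\<^sub>v (Bux n *\<^sub>v u) + Bqy n *\<^sub>v (transpose_mat (Bqy n) *\<^sub>v u)"
    using u Bux Bqy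
    by (simp add: assoc_mult_mat_vec[of _ ?k "n * n" _ ?k] assoc_mult_mat_vec[of _ ?k ?q _ ?k] carrier_matI)
  also have "Bqy n *\<^sub>v (transpose_mat (Bqy n) *\<^sub>v u) = (Bqy n * transpose_mat (Bqx n)) *\<^sub>v v"
    unfolding curl using v by (intro assoc_mult_mat_vec[symmetric, of _ ?k ?q _ "(n - 1) * n"]) auto
  also have "\<dots> = transpose_mat (Bux n) *\<^sub>v (Bvy n *\<^sub>v v)"
    unfolding transpose_Bux_mult_Bvy[symmetric] using v
    by (intro assoc_mult_mat_vec[of _ ?k "n * n" _ "(n - 1) * n"]) auto
  also have "transpose_mat (Bux n) *\<^sub>v (Bux n *\<^sub>v u) + transpose_mat (Bux n) *\<^sub>v (Bvy n *\<^sub>v v)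
      = transpose_mat (Bux n) *\<^sub>v (Bux n *\<^sub>v u + Bvy n *\<^sub>v v)"
    using mult_mat_vec_carrier[OF Bux u] mult_mat_vec_carrier[OF Bvy v]
    by (intro mult_add_distrib_mat_vec[symmetric, of _ ?k "n * n"]) auto
  also have "\<dots> = 0\<^sub>v ?k" unfolding div by (simp add: mult_mat_zero_vec)
  finally have Bux_u: "Bux n *\<^sub>v u = 0\<^sub>v (n * n)" by (rule gram_sum_kernel(1)[OF Bux Bqy u])
  have n_nz: "real n \<noteq> 0" using n by simp
  have "kron (1\<^sub>m n) (cumsum_mat n) \<in> carrier_mat ?k (n * n)"
    and "kron (cumsum_mat n) (1\<^sub>m n) \<in> carrier_mat ((n - 1) * n) (n * n)" by auto
  note left_inverses = this
  show u0: "u = 0\<^sub>v ?k"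
    by (rule kernel_trivial_if_left_inverse[OF left_inverses(1) Bux Bux_left_inverse[OF n] n_nz u Bux_u])
  have "Bvy n *\<^sub>v v = 0\<^sub>v (n * n)"
    using div mult_mat_vec_carrier[OF Bvy v] unfolding u0 by (simp add: mult_mat_zero_vec)
  then show "v = 0\<^sub>v ((n - 1) * n)"
    by (rule kernel_trivial_if_left_inverse[OF left_inverses(2) Bvy Bvy_left_inverse[OF n] n_nz v])
qed

lemma AN_kernel_trivial:
  assumes n: "n > 0" and x: "x \<in> carrier_vec (2 * n * (n - 1))"
    and ker: "gram_sum (BB n) (CC n) *\<^sub>v x = 0\<^sub>v (2 * n * (n - 1))"
  shows "x = 0\<^sub>v (2 * n * (n - 1))"
proof -
  have dim: "2 * n * (n - 1) = n * (n - 1) + (n - 1) * n" by (simp add: algebra_simps)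
  define u v where "u = vec_first x (n * (n - 1))" and "v = vec_last x ((n - 1) * n)"
  have u: "u \<in> carrier_vec (n * (n - 1))" and v: "v \<in> carrier_vec ((n - 1) * n)"
    unfolding u_def v_def by auto
  have x_split: "x = u @\<^sub>v v" using x unfolding u_def v_def dim by simp
  have Bux_u: "Bux n *\<^sub>v u \<in> carrier_vec (n * n)" and Bvy_v: "Bvy n *\<^sub>v v \<in> carrier_vec (n * n)"
    and Bqy_u: "transpose_mat (Bqy n) *\<^sub>v u \<in> carrier_vec ((n - 1) * (n - 1))"
    and Bqx_v: "transpose_mat (Bqx n) *\<^sub>v v \<in> carrier_vec ((n - 1) * (n - 1))"
    using u v by (auto intro!: mult_mat_vec_carrier)
  note BBx = gram_sum_kernel(1)[OF BB_carrier CC_carrier x ker]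
  note CCx = gram_sum_kernel(2)[OF BB_carrier CC_carrier x ker]
  have "- (Bux n *\<^sub>v u + Bvy n *\<^sub>v v) = 0\<^sub>v (n * n)"
    using BBx u v unfolding BB_def x_split by (simp add: hcat_uminus hcat_mult_append_vec)
  then have div: "Bux n *\<^sub>v u + Bvy n *\<^sub>v v = 0\<^sub>v (n * n)"
    by (simp add: uminus_zero_vec_eq[OF add_carrier_vec[OF Bux_u Bvy_v]])
  have "- (transpose_mat (Bqy n) *\<^sub>v u) + transpose_mat (Bqx n) *\<^sub>v v = 0\<^sub>v ((n - 1) * (n - 1))"
    using CCx u v unfolding CC_def x_split by (simp add: hcat_mult_append_vec)
  then have curl: "transpose_mat (Bqy n) *\<^sub>v u = transpose_mat (Bqx n) *\<^sub>v v"
    by (rule uminus_add_eq_zero_vec[OF Bqy_u Bqx_v])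
  show ?thesis
    using div_curl_free_eq_zero[OF n u v div curl] unfolding x_split dim
    by (intro eq_vecI) auto
qed

theorem mainTheorem10:
  fixes n :: nat
  assumes "n \<ge> 2"
  shows "let h = hh n;
             A = AN n + (2 / h^2) \<cdot>\<^sub>m 1\<^sub>m (2 * n * (n - 1));
             S = BB n * inv_mat A * transpose_mat (BB n);
             SN = BB n * inv_mat (AN n) * transpose_mat (BB n)
         in pinv S = pinv SN + (2 / h^2) \<cdot>\<^sub>m pinv (BB n * transpose_mat (BB n))"
proof -
  have n: "n > 0" using assms by simp
  then have c: "2 / (hh n)^2 > 0" unfolding hh_def by simp
  show ?thesis
    unfolding Let_def AN_def gram_sum_def[symmetric]
    by (rule pinv_shifted_gram_schur_complement[OF BB_carrier CC_carrier BB_mult_transpose_CC c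
          AN_kernel_trivial[OF n]])
qed

end
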